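(* Let $\mathbf A=(A,\land,\lor,{}',0,1)$ be a pseudo-Kleene lattice. Then $\mathbf A$ is super-paraorthomodular if and only if $\mathbf A$ is a pasting of its Kleene blocks, i.e. for all $x,y\in A$: $x\leq y$ if and only if there is a Kleene block $\mathbf K$ of $\mathbf A$ with $x,y\in K$ and $x\leq y$ in $\mathbf K$.
   Context: A pseudo-Kleene lattice is an algebra $(A,\land,\lor,{}',0,1)$ such that $(A,\land,\lor,0,1)$ is a bounded lattice, ${}'$ is an antitone involution ($x\leq y$ implies $y'\leq x'$, and $x''=x$), and $x\land x'\leq y\lor y'$ for all $x,y$. A pseudo-Kleene lattice is super-paraorthomodular (sp-orthomodular) if it satisfies, for all $x,y$: (SP1) if $x\leq y$ and $x'\land y=(x\land x')\lor(y\land y')$, then $y\land(x\lor x')=x\lor(y\land y')$; (SP2) if $x\leq y$, then $(x\land x')\lor(y\land y')=(x'\land y)\land(x'\land y)'$. A Kleene sub-lattice of a pseudo-Kleene lattice $\mathbf A$ is a subset containing $0,1$ and closed under $\land,\lor,{}'$ which is distributive as a lattice; a Kleene block is a maximal (under inclusion) Kleene sub-lattice. *)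

theory Defs
  imports Main
begin

definition pseudo_kleene :: "('a::bounded_lattice \<Rightarrow> 'a) \<Rightarrow> bool" where
  "pseudo_kleene c \<longleftrightarrow>
     (\<forall>x y. x \<le> y \<longrightarrow> c y \<le> c x) \<and>
     (\<forall>x. c (c x) = x) \<and>
     (\<forall>x y. inf x (c x) \<le> sup y (c y))"

definition sp_orthomodular :: "('a::bounded_lattice \<Rightarrow> 'a) \<Rightarrow> bool" where
  "sp_orthomodular c \<longleftrightarrow>
     (\<forall>x y. x \<le> y \<and> inf (c x) y = sup (inf x (c x)) (inf y (c y))
        \<longrightarrow> inf y (sup x (c x)) = sup x (inf y (c y))) \<and>
     (\<forall>x y. x \<le> y \<longrightarrow>
        sup (inf x (c x)) (inf y (c y)) = inf (inf (c x) y) (c (inf (c x) y)))"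

definition kleene_sublattice :: "('a::bounded_lattice \<Rightarrow> 'a) \<Rightarrow> 'a set \<Rightarrow> bool" where
  "kleene_sublattice c K \<longleftrightarrow>
     bot \<in> K \<and> top \<in> K \<and>
     (\<forall>x\<in>K. \<forall>y\<in>K. inf x y \<in> K) \<and>
     (\<forall>x\<in>K. \<forall>y\<in>K. sup x y \<in> K) \<and>
     (\<forall>x\<in>K. c x \<in> K) \<and>
     (\<forall>x\<in>K. \<forall>y\<in>K. \<forall>z\<in>K. inf x (sup y z) = sup (inf x y) (inf x z))"

definition kleene_block :: "('a::bounded_lattice \<Rightarrow> 'a) \<Rightarrow> 'a set \<Rightarrow> bool" where
  "kleene_block c K \<longleftrightarrow> kleene_sublattice c K \<and>
     (\<forall>L. kleene_sublattice c L \<and> K \<subseteq> L \<longrightarrow> L = K)"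

end

(* If x \<le> y lie in a common distributive Kleene sublattice, then SP1 and SP2 for x, y are plain
   distributivity computations. Conversely, for a \<le> b in an sp-orthomodular lattice the
   subalgebra generated by a and b is computed explicitly: it consists of the joins of the nine
   elements a \<sqinter> b', a \<sqinter> a', a, b \<sqinter> b', b \<sqinter> a', b, b', a', 1 over twenty index sets, which form
   a lattice of sets closed under a polarity, and the complement of such a join is the join over
   the polar index set. Checking the latter needs ten lattice inequalities, three of which are
   SP2 and two instances of the modular law that SP1 and SP2 provide. The index sets then map
   homomorphically onto the subalgebra, which is therefore distributive, and Zorn's lemma
   enlarges it to a Kleene block. *)
theory Submission
  imports Defs
begin

unbundle lattice_syntax

locale pseudo_kleene_lattice =
  fixes c :: "'a::bounded_lattice \<Rightarrow> 'a"
  assumes antitone: "x \<le> y \<Longrightarrow> c y \<le> c x"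
    and involution [simp]: "c (c x) = x"
    and kleene: "x \<sqinter> c x \<le> y \<squnion> c y"
begin

lemma c_le_c_iff [simp]: "c x \<le> c y \<longleftrightarrow> y \<le> x"
  by (metis antitone involution)

lemma le_c_commute: "x \<le> c y \<longleftrightarrow> y \<le> c x"
  by (metis c_le_c_iff involution)

lemma c_sup [simp]: "c (x \<squnion> y) = c x \<sqinter> c y"
proof (rule antisym)
  show "c (x \<squnion> y) \<le> c x \<sqinter> c y"
    by (simp add: antitone)
  have "x \<squnion> y \<le> c (c x \<sqinter> c y)"
    by (metis c_le_c_iff involution inf_le1 inf_le2 sup_least)
  then show "c x \<sqinter> c y \<le> c (x \<squnion> y)"
    by (metis c_le_c_iff involution)
qed

lemma c_inf [simp]: "c (x \<sqinter> y) = c x \<squnion> c y"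
  by (metis c_sup involution)

lemma c_bot [simp]: "c \<bottom> = \<top>"
  by (metis c_le_c_iff bot_least involution top.extremum_unique)

lemma c_top [simp]: "c \<top> = \<bottom>"
  by (metis c_bot involution)

end

lemma pseudo_kleene_lattice_iff: "pseudo_kleene_lattice c \<longleftrightarrow> pseudo_kleene c"
  unfolding pseudo_kleene_lattice_def pseudo_kleene_def by blast

lemma kleene_sublatticeD:
  assumes "kleene_sublattice c K"
  shows "\<bottom> \<in> K" "\<top> \<in> K"
    and "x \<in> K \<Longrightarrow> y \<in> K \<Longrightarrow> x \<sqinter> y \<in> K"
    and "x \<in> K \<Longrightarrow> y \<in> K \<Longrightarrow> x \<squnion> y \<in> K"
    and "x \<in> K \<Longrightarrow> c x \<in> K"
    and "x \<in> K \<Longrightarrow> y \<in> K \<Longrightarrow> z \<in> K \<Longrightarrow> x \<sqinter> (y \<squnion> z) = x \<sqinter> y \<squnion> x \<sqinter> z"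
  using assms by (simp_all add: kleene_sublattice_def)

lemma kleene_sublattice_Union_chain:
  assumes "C \<noteq> {}" and chain: "subset.chain {K. kleene_sublattice c K} C"
  shows "kleene_sublattice c (\<Union>C)"
proof -
  have common: "\<exists>K\<in>C. kleene_sublattice c K \<and> x \<in> K \<and> y \<in> K \<and> z \<in> K"
    if xyz: "x \<in> \<Union>C" "y \<in> \<Union>C" "z \<in> \<Union>C" for x y z
  proof -
    obtain K where "K \<in> C" "{x, y, z} \<subseteq> K"
      by (rule finite_subset_Union_chain[OF _ _ assms, of "{x, y, z}"]) (use xyz in auto)
    then show ?thesis
      using chain by (auto simp: subset_chain_def)
  qed
  obtain K0 where K0: "K0 \<in> C" "kleene_sublattice c K0"
    using assms by (auto simp: subset_chain_def)
  show ?thesis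
    unfolding kleene_sublattice_def
  proof (intro conjI ballI)
    show "\<bottom> \<in> \<Union>C" "\<top> \<in> \<Union>C"
      using K0 kleene_sublatticeD(1,2) by blast+
  next
    fix x y z assume "x \<in> \<Union>C" "y \<in> \<Union>C" "z \<in> \<Union>C"
    then obtain K where K: "K \<in> C" "kleene_sublattice c K" "x \<in> K" "y \<in> K" "z \<in> K"
      using common by blast
    show "x \<sqinter> (y \<squnion> z) = x \<sqinter> y \<squnion> x \<sqinter> z"
      using K kleene_sublatticeD(6) by blast
  next
    fix x y assume "x \<in> \<Union>C" "y \<in> \<Union>C"
    then obtain K where K: "K \<in> C" "kleene_sublattice c K" "x \<in> K" "y \<in> K"
      using common by blast
    show "x \<sqinter> y \<in> \<Union>C" "x \<squnion> y \<in> \<Union>C"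
      using K kleene_sublatticeD(3,4)[OF K(2)] by blast+
  next
    fix x assume "x \<in> \<Union>C"
    then obtain K where K: "K \<in> C" "kleene_sublattice c K" "x \<in> K"
      using common by blast
    show "c x \<in> \<Union>C"
      using K kleene_sublatticeD(5)[OF K(2)] by blast
  qed
qed

lemma kleene_sublattice_extends_to_block:
  assumes "kleene_sublattice c S"
  obtains K where "kleene_block c K" "S \<subseteq> K"
proof -
  let ?A = "{K. kleene_sublattice c K \<and> S \<subseteq> K}"
  have "\<exists>M\<in>?A. \<forall>K\<in>?A. M \<subseteq> K \<longrightarrow> K = M"
  proof (rule subset_Zorn_nonempty)
    show "?A \<noteq> {}"
      using assms by blast
  next
    fix C assume "C \<noteq> {}" and chain: "subset.chain ?A C"
    then have "kleene_sublattice c (\<Union>C)"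
      by (intro kleene_sublattice_Union_chain) (auto simp: subset_chain_def)
    moreover have "S \<subseteq> \<Union>C"
      using \<open>C \<noteq> {}\<close> chain by (fastforce simp: subset_chain_def)
    ultimately show "\<Union>C \<in> ?A"
      by blast
  qed
  then obtain M where "M \<in> ?A" and maximal: "\<forall>K\<in>?A. M \<subseteq> K \<longrightarrow> K = M" ..
  then have "kleene_block c M"
    unfolding kleene_block_def by auto
  with \<open>M \<in> ?A\<close> show thesis
    using that by blast
qed

lemma (in pseudo_kleene_lattice) sp_identities_in_kleene_sublattice:
  assumes K: "kleene_sublattice c K" "x \<in> K" "y \<in> K" and "x \<le> y"
  shows "c x \<sqinter> y = x \<sqinter> c x \<squnion> y \<sqinter> c y \<Longrightarrow> y \<sqinter> (x \<squnion> c x) = x \<squnion> y \<sqinter> c y"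
    and "x \<sqinter> c x \<squnion> y \<sqinter> c y = c x \<sqinter> y \<sqinter> c (c x \<sqinter> y)"
proof -
  note distrib = kleene_sublatticeD(6)[OF K(1)] and closed = kleene_sublatticeD(3,5)[OF K(1)]
  assume sp1_hyp: "c x \<sqinter> y = x \<sqinter> c x \<squnion> y \<sqinter> c y"
  have "y \<sqinter> (x \<squnion> c x) = x \<squnion> c x \<sqinter> y"
    using distrib[OF K(3,2) closed(2)[OF K(2)]] \<open>x \<le> y\<close>
    by (simp add: inf_absorb1 inf_commute)
  also have "\<dots> = x \<squnion> y \<sqinter> c y"
    using sp1_hyp by (simp add: sup_absorb1 flip: sup_assoc)
  finally show "y \<sqinter> (x \<squnion> c x) = x \<squnion> y \<sqinter> c y" .
next
  note distrib = kleene_sublatticeD(6)[OF K(1)] and closed = kleene_sublatticeD(3,5)[OF K(1)]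
  have "c x \<sqinter> y \<sqinter> c (c x \<sqinter> y) = (c x \<sqinter> y) \<sqinter> x \<squnion> (c x \<sqinter> y) \<sqinter> c y"
    using distrib[OF closed(1)[OF closed(2)[OF K(2)] K(3)] K(2) closed(2)[OF K(3)]] by simp
  also have "\<dots> = x \<sqinter> c x \<squnion> y \<sqinter> c y"
    using inf.absorb1[OF \<open>x \<le> y\<close>] inf.absorb1[OF antitone[OF \<open>x \<le> y\<close>]]
    by (metis inf.commute inf.left_commute)
  finally show "x \<sqinter> c x \<squnion> y \<sqinter> c y = c x \<sqinter> y \<sqinter> c (c x \<sqinter> y)" ..
qed

lemma (in pseudo_kleene_lattice) sp_orthomodular_if_comparables_in_kleene_sublattices:
  assumes "\<And>x y. x \<le> y \<Longrightarrow> \<exists>K. kleene_sublattice c K \<and> x \<in> K \<and> y \<in> K"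
  shows "sp_orthomodular c"
  unfolding sp_orthomodular_def using assms sp_identities_in_kleene_sublattice by meson

lemma (in pseudo_kleene_lattice) kleene_sublattice_image:
  fixes J :: "'i set \<Rightarrow> 'a" and M :: "'i set \<Rightarrow> 'i set"
  assumes "{} \<in> F" "J {} = \<bottom>"
    and Un_closed: "\<And>D E. D \<in> F \<Longrightarrow> E \<in> F \<Longrightarrow> D \<union> E \<in> F"
    and J_Un: "\<And>D E. D \<in> F \<Longrightarrow> E \<in> F \<Longrightarrow> J (D \<union> E) = J D \<squnion> J E"
    and M_closed: "\<And>D. D \<in> F \<Longrightarrow> M D \<in> F"
    and M_M: "\<And>D. D \<in> F \<Longrightarrow> M (M D) = D"
    and M_Un: "\<And>D E. M (D \<union> E) = M D \<inter> M E"
    and c_J: "\<And>D. D \<in> F \<Longrightarrow> c (J D) = J (M D)"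
  shows "kleene_sublattice c (J ` F)"
proof -
  have Int_closed: "D \<inter> E \<in> F" and J_Int: "J (D \<inter> E) = J D \<sqinter> J E"
    if "D \<in> F" "E \<in> F" for D E
  proof -
    have Int_eq: "D \<inter> E = M (M D \<union> M E)"
      using that by (simp add: M_Un M_M)
    then show "D \<inter> E \<in> F"
      using that by (simp add: M_closed Un_closed)
    have "J (D \<inter> E) = c (J (M D \<union> M E))"
      using that by (simp add: Int_eq c_J M_closed Un_closed)
    also have "\<dots> = c (J (M D)) \<sqinter> c (J (M E))"
      using that by (simp add: J_Un M_closed)
    also have "\<dots> = J D \<sqinter> J E"
      using that by (simp add: c_J M_closed M_M)
    finally show "J (D \<inter> E) = J D \<sqinter> J E" .
  qed
  have "\<top> = J (M {})"
    using c_J[OF \<open>{} \<in> F\<close>] \<open>J {} = \<bottom>\<close> by simp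
  then have "\<top> \<in> J ` F"
    using \<open>{} \<in> F\<close> M_closed by blast
  moreover have "J D \<sqinter> (J E \<squnion> J G) = J D \<sqinter> J E \<squnion> J D \<sqinter> J G"
    if "D \<in> F" "E \<in> F" "G \<in> F" for D E G
    using that by (simp add: Un_closed Int_closed flip: J_Un J_Int Int_Un_distrib)
  ultimately show ?thesis
    using assms(1,2) unfolding kleene_sublattice_def
    by (auto simp flip: J_Un J_Int intro!: image_eqI simp: Un_closed Int_closed c_J M_closed)
qed

locale sp_orthomodular_lattice = pseudo_kleene_lattice +
  assumes sp1: "x \<le> y \<Longrightarrow> c x \<sqinter> y = x \<sqinter> c x \<squnion> y \<sqinter> c y \<Longrightarrow>
      y \<sqinter> (x \<squnion> c x) = x \<squnion> y \<sqinter> c y"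
    and sp2: "x \<le> y \<Longrightarrow> x \<sqinter> c x \<squnion> y \<sqinter> c y = c x \<sqinter> y \<sqinter> c (c x \<sqinter> y)"

lemma sp_orthomodular_lattice_iff:
  "sp_orthomodular_lattice c \<longleftrightarrow> pseudo_kleene_lattice c \<and> sp_orthomodular c"
  unfolding sp_orthomodular_lattice_def sp_orthomodular_lattice_axioms_def sp_orthomodular_def
  by blast

context sp_orthomodular_lattice
begin

lemma sp2_expanded:
  assumes "x \<le> y"
  shows "c x \<sqinter> (x \<squnion> c y) \<sqinter> y = x \<sqinter> c x \<squnion> y \<sqinter> c y"
  using sp2[OF assms] by (simp add: inf_aci sup_commute)

(* The trick is to pass to z = y \<sqinter> (x \<squnion> c y): there c x \<sqinter> z lies
   below its own complement, so SP2 for x \<le> z is precisely the hypothesis of SP1 for x \<le> z. *)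
lemma modular_c_upper:
  assumes "x \<le> y"
  shows "y \<sqinter> (x \<squnion> c y) \<le> x \<squnion> y \<sqinter> c y"
proof -
  define z where "z = y \<sqinter> (x \<squnion> c y)"
  have "x \<le> z" "z \<le> y"
    using assms by (simp_all add: z_def)
  have "c x \<sqinter> z \<le> x \<squnion> c y"
    by (simp add: z_def le_infI2)
  also have "\<dots> \<le> x \<squnion> c z"
    using antitone[OF \<open>z \<le> y\<close>] by (simp add: le_supI2)
  finally have "c x \<sqinter> z \<le> c (c x \<sqinter> z)"
    by simp
  then have "c x \<sqinter> z \<sqinter> c (c x \<sqinter> z) = c x \<sqinter> z"
    by (simp add: inf_absorb1)
  then have sp2_z: "x \<sqinter> c x \<squnion> z \<sqinter> c z = c x \<sqinter> z"
    using sp2[OF \<open>x \<le> z\<close>] by simp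
  have "z \<le> x \<squnion> c x"
    unfolding z_def using antitone[OF assms] by (meson inf_le2 order_trans sup_mono order_refl)
  then have z_eq: "z = x \<squnion> z \<sqinter> c z"
    using sp1[OF \<open>x \<le> z\<close> sp2_z[symmetric]] by (simp add: inf_absorb1)
  have "z \<sqinter> c z \<le> c x \<sqinter> z"
    using sp2_z by (metis sup_ge2)
  also have "\<dots> = x \<sqinter> c x \<squnion> y \<sqinter> c y"
    using sp2_expanded[OF assms] by (simp add: z_def inf_aci)
  also have "\<dots> \<le> x \<squnion> y \<sqinter> c y"
    by (simp add: le_supI1)
  finally have "x \<squnion> z \<sqinter> c z \<le> x \<squnion> y \<sqinter> c y"
    by simp
  with z_eq show ?thesis
    by (simp add: z_def)
qed

lemma modular_c_lower:
  assumes "x \<le> y"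
  shows "y \<sqinter> (x \<squnion> c x) \<le> x \<squnion> y \<sqinter> c x"
proof -
  have "c x \<sqinter> (c y \<squnion> x) \<le> c y \<squnion> c x \<sqinter> x"
    using modular_c_upper[OF antitone[OF assms]] by simp
  then have "c (c y \<squnion> c x \<sqinter> x) \<le> c (c x \<sqinter> (c y \<squnion> x))"
    by (rule antitone)
  then show ?thesis
    by (simp add: inf_commute sup_commute)
qed

end

(* Indices of the generators of the subalgebra generated by a \<le> b (see generator below):
   (j, i) \<in> orthogonal_pairs records generator j \<le> c (generator i). *)
definition orthogonal_pairs :: "(nat \<times> nat) set" where
  "orthogonal_pairs =
     {(0,0), (0,1), (0,2), (0,3), (0,4), (0,5), (0,6), (0,7),
      (1,0), (1,1), (1,2), (1,3), (1,4), (1,6), (1,7),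
      (2,0), (2,1), (2,3), (2,4), (2,6), (2,7),
      (3,0), (3,1), (3,2), (3,3), (3,4), (3,5), (3,6),
      (4,0), (4,1), (4,2), (4,3), (4,6),
      (5,0), (5,3), (5,6),
      (6,0), (6,1), (6,2), (6,3), (6,4), (6,5),
      (7,0), (7,1), (7,2)}"

definition polar :: "nat set \<Rightarrow> nat set" where
  "polar D = {i \<in> {..<9}. \<forall>j\<in>D. (j, i) \<in> orthogonal_pairs}"

definition lower_sets :: "nat set list" where
  "lower_sets = [{}, {0}, {0,1}, {0,1,2}, {0,3}, {0,1,3}, {0,1,2,3}, {0,1,3,4}, {0,1,2,3,4}, {0,1,2,3,4,5}]"

definition generated_sets :: "nat set set" where
  "generated_sets = set lower_sets \<union> polar ` set lower_sets"

lemma polar_lower_sets: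
  "polar {} = {0,1,2,3,4,5,6,7,8}" "polar {0} = {0,1,2,3,4,5,6,7}"
  "polar {0,1} = {0,1,2,3,4,6,7}" "polar {0,1,2} = {0,1,3,4,6,7}" "polar {0,3} = {0,1,2,3,4,5,6}"
  "polar {0,1,3} = {0,1,2,3,4,6}" "polar {0,1,2,3} = {0,1,3,4,6}" "polar {0,1,3,4} = {0,1,2,3,6}"
  "polar {0,1,2,3,4} = {0,1,3,6}" "polar {0,1,2,3,4,5} = {0,3,6}"
  by code_simp+

lemma polar_polar_lower_sets: "\<forall>D\<in>set lower_sets. polar (polar D) = D"
  by code_simp

lemma generated_sets_Un: "\<forall>D\<in>generated_sets. \<forall>E\<in>generated_sets. D \<union> E \<in> generated_sets"
  by code_simp

lemma polar_Un: "polar (D \<union> E) = polar D \<inter> polar E"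
  by (auto simp: polar_def)

lemma finite_polar: "finite (polar D)"
  by (simp add: polar_def)

locale sp_orthomodular_chain = sp_orthomodular_lattice c for c :: "'a::bounded_lattice \<Rightarrow> 'a" +
  fixes a b :: 'a
  assumes a_le_b: "a \<le> b"
begin

definition generator :: "nat \<Rightarrow> 'a" where
  "generator = nth [a \<sqinter> c b, a \<sqinter> c a, a, b \<sqinter> c b, b \<sqinter> c a, b, c b, c a, \<top>]"

definition join_generators :: "nat set \<Rightarrow> 'a" where
  "join_generators D = Sup_fin (insert \<bottom> (generator ` D))"

lemma join_generators_le_iff: "finite D \<Longrightarrow> join_generators D \<le> x \<longleftrightarrow> (\<forall>i\<in>D. generator i \<le> x)"
  by (simp add: join_generators_def Sup_fin.bounded_iff)

lemma join_generators_Un: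
  assumes "finite D" "finite E"
  shows "join_generators (D \<union> E) = join_generators D \<squnion> join_generators E"
proof -
  have "join_generators (D \<union> E) = Sup_fin (insert \<bottom> (generator ` D) \<union> insert \<bottom> (generator ` E))"
    unfolding join_generators_def by (rule arg_cong[where f = Sup_fin]) auto
  also have "\<dots> = join_generators D \<squnion> join_generators E"
    unfolding join_generators_def using assms by (intro Sup_fin.union) auto
  finally show ?thesis .
qed

lemma generator_orthogonal: "(j, i) \<in> orthogonal_pairs \<Longrightarrow> generator j \<le> c (generator i)"
  using a_le_b antitone[OF a_le_b] kleene[of a b] kleene[of b a]
  by (auto simp: orthogonal_pairs_def generator_def le_infI1 le_infI2 le_supI1 le_supI2
      inf_commute sup_commute intro: order_trans)

lemma c_join_generators_polar_le:
  assumes "D \<in> set lower_sets"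
  shows "c (join_generators (polar D)) \<le> join_generators D"
proof -
  \<comment> \<open>Whitman's decision procedure for lattice inequalities, run by blast\<close>
  note [intro!] = le_infI le_supI and [intro] = le_infI1 le_infI2 le_supI1 le_supI2
  have "c (join_generators {0,1,2,3,4,6}) \<le> c a \<sqinter> (a \<squnion> c b) \<sqinter> b"
    by (simp add: join_generators_def generator_def; blast)
  also have "\<dots> = a \<sqinter> c a \<squnion> b \<sqinter> c b"
    using a_le_b by (rule sp2_expanded)
  also have "\<dots> \<le> join_generators {0,1,3}"
    by (simp add: join_generators_def generator_def; blast)
  finally have case_013: "c (join_generators {0,1,2,3,4,6}) \<le> join_generators {0,1,3}" .
  have "c (join_generators {0,1,3,4,6}) \<le> b \<sqinter> (a \<squnion> c b)"
    by (simp add: join_generators_def generator_def; blast)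
  also have "\<dots> \<le> a \<squnion> b \<sqinter> c b"
    using a_le_b by (rule modular_c_upper)
  also have "\<dots> \<le> join_generators {0,1,2,3}"
    by (simp add: join_generators_def generator_def; blast)
  finally have case_0123: "c (join_generators {0,1,3,4,6}) \<le> join_generators {0,1,2,3}" .
  have "c (join_generators {0,1,3,6}) \<le> b \<sqinter> (a \<squnion> c a)"
    by (simp add: join_generators_def generator_def; blast)
  also have "\<dots> \<le> a \<squnion> b \<sqinter> c a"
    using a_le_b by (rule modular_c_lower)
  also have "\<dots> \<le> join_generators {0,1,2,3,4}"
    by (simp add: join_generators_def generator_def; blast)
  finally have case_01234: "c (join_generators {0,1,3,6}) \<le> join_generators {0,1,2,3,4}" .
  have "\<forall>D\<in>set lower_sets. c (join_generators (polar D)) \<le> join_generators D"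
    unfolding lower_sets_def list.set
    by (simp only: ball_simps polar_lower_sets case_013 case_0123 case_01234 simp_thms)
      (simp add: join_generators_def generator_def; blast)
  from this assms show ?thesis by (rule bspec)
qed

lemma join_generators_polar_le_c:
  assumes "finite D"
  shows "join_generators (polar D) \<le> c (join_generators D)"
proof -
  have "generator i \<le> c (join_generators D)" if "i \<in> polar D" for i
  proof -
    have "join_generators D \<le> c (generator i)"
      using that assms by (auto simp: join_generators_le_iff polar_def generator_orthogonal)
    then show ?thesis
      by (simp add: le_c_commute)
  qed
  then show ?thesis
    by (simp add: join_generators_le_iff finite_polar)
qed

lemma finite_generated_sets: "D \<in> generated_sets \<Longrightarrow> finite D"
  by (auto simp: generated_sets_def lower_sets_def finite_polar)

lemma polar_generated_sets:
  assumes "D \<in> generated_sets"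
  shows "polar D \<in> generated_sets" and "polar (polar D) = D"
  using assms polar_polar_lower_sets by (auto simp: generated_sets_def)

lemma c_join_generators:
  assumes "D \<in> generated_sets"
  shows "c (join_generators D) = join_generators (polar D)"
proof -
  have lower: "c (join_generators (polar L)) = join_generators L" if "L \<in> set lower_sets" for L
  proof (rule antisym)
    show "c (join_generators (polar L)) \<le> join_generators L"
      using that by (rule c_join_generators_polar_le)
    show "join_generators L \<le> c (join_generators (polar L))"
      using join_generators_polar_le_c[OF finite_polar, of L] polar_polar_lower_sets that by simp
  qed
  from assms consider L where "L \<in> set lower_sets" "D = L"
    | L where "L \<in> set lower_sets" "D = polar L"
    unfolding generated_sets_def by blast
  then show ?thesis
    by cases (use lower polar_polar_lower_sets in \<open>auto simp flip: lower\<close>)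
qed

definition generated_subalgebra :: "'a set" where
  "generated_subalgebra = join_generators ` generated_sets"

lemma kleene_sublattice_generated_subalgebra: "kleene_sublattice c generated_subalgebra"
  unfolding generated_subalgebra_def
proof (rule kleene_sublattice_image)
  show "{} \<in> generated_sets"
    by (simp add: generated_sets_def lower_sets_def)
  show "join_generators {} = \<bottom>"
    by (simp add: join_generators_def)
qed (simp_all add: generated_sets_Un join_generators_Un finite_generated_sets polar_generated_sets
      polar_Un c_join_generators)

lemma a_b_in_generated_subalgebra: "a \<in> generated_subalgebra" "b \<in> generated_subalgebra"
proof -
  have "{0,1,2} \<in> generated_sets" "{0,1,2,3,4,5} \<in> generated_sets"
    by (simp_all add: generated_sets_def lower_sets_def)
  moreover have "join_generators {0,1,2} = a" "join_generators {0,1,2,3,4,5} = b"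
    using a_le_b by (simp_all add: join_generators_def generator_def sup_absorb2 inf_absorb1 le_infI1 le_supI)
  ultimately show "a \<in> generated_subalgebra" "b \<in> generated_subalgebra"
    unfolding generated_subalgebra_def by (metis image_eqI)+
qed

end

lemma (in sp_orthomodular_lattice) comparables_in_kleene_sublattice:
  assumes "a \<le> b"
  shows "\<exists>K. kleene_sublattice c K \<and> a \<in> K \<and> b \<in> K"
proof -
  interpret sp_orthomodular_chain c a b
    using assms by unfold_locales
  show ?thesis
    using kleene_sublattice_generated_subalgebra a_b_in_generated_subalgebra by blast
qed

theorem theorem3p13:
  fixes c :: "'a::bounded_lattice \<Rightarrow> 'a"
  assumes "pseudo_kleene c"
  shows "sp_orthomodular c \<longleftrightarrow>
    (\<forall>x y. x \<le> y \<longleftrightarrow> (\<exists>K. kleene_block c K \<and> x \<in> K \<and> y \<in> K \<and> x \<le> y))"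
proof -
  interpret pseudo_kleene_lattice c
    using assms by (simp add: pseudo_kleene_lattice_iff)
  have "sp_orthomodular c \<longleftrightarrow>
      (\<forall>x y. x \<le> y \<longrightarrow> (\<exists>K. kleene_sublattice c K \<and> x \<in> K \<and> y \<in> K))"
  proof
    assume "sp_orthomodular c"
    then interpret sp_orthomodular_lattice c
      by (simp add: sp_orthomodular_lattice_iff pseudo_kleene_lattice_axioms)
    show "\<forall>x y. x \<le> y \<longrightarrow> (\<exists>K. kleene_sublattice c K \<and> x \<in> K \<and> y \<in> K)"
      using comparables_in_kleene_sublattice by blast
  qed (use sp_orthomodular_if_comparables_in_kleene_sublattices in blast)
  also have "\<dots> \<longleftrightarrow> (\<forall>x y. x \<le> y \<longleftrightarrow> (\<exists>K. kleene_block c K \<and> x \<in> K \<and> y \<in> K \<and> x \<le> y))"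
    using kleene_sublattice_extends_to_block unfolding kleene_block_def by (metis subset_iff)
  finally show ?thesis .
qed

end
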